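(* Let $k\ge 2$ and let $s$ be a normalized, fully $k$-ary string of length $n$. Then $d_{\rm g}(s)\le n-2$.
   Context: Strings are finite words over the alphabet $\{0,1,2,\dots\}$. A string is \emph{normalized} if no two adjacent symbols are equal; the \emph{normalization} of a string is obtained by replacing every maximal run of identical symbols by a single copy of that symbol. A string is \emph{fully $k$-ary} if the set of symbols occurring in it is exactly $\{0,1,\dots,k-1\}$. For a normalized string $s=s_1s_2\cdots s_n$ and $1\le i\le n$, the flip (prefix reversal) $f^{(i)}(s)$ is the normalization of $s_i s_{i-1}\cdots s_1 s_{i+1}\cdots s_n$. The \emph{grouping distance} $d_{\rm g}(s)$ of a normalized fully $k$-ary string $s$ is the minimum number of flips needed to transform $s$ into a string of length $k$. *)

theory Defs
  imports Main
begin

definition normalized :: "nat list \<Rightarrow> bool" where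
  "normalized s \<longleftrightarrow> (\<forall>i. Suc i < length s \<longrightarrow> s ! i \<noteq> s ! Suc i)"

definition normalize :: "nat list \<Rightarrow> nat list" where
  "normalize s = remdups_adj s"

definition fully_kary :: "nat \<Rightarrow> nat list \<Rightarrow> bool" where
  "fully_kary k s \<longleftrightarrow> set s = {0..<k}"

definition flip :: "nat \<Rightarrow> nat list \<Rightarrow> nat list" where
  "flip i s = normalize (rev (take i s) @ drop i s)"

definition flip_step :: "nat list \<Rightarrow> nat list \<Rightarrow> bool" where
  "flip_step s t \<longleftrightarrow> (\<exists>i. 1 \<le> i \<and> i \<le> length s \<and> t = flip i s)"

definition grouping_distance :: "nat \<Rightarrow> nat list \<Rightarrow> nat" where
  "grouping_distance k s = (LEAST m. \<exists>t. (flip_step ^^ m) s t \<and> length t = k)"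

end

theory Submission
  imports Defs
begin

text \<open>Induction on the length of the string. If its first symbol u occurs again, flipping
  the prefix that ends at that second occurrence makes two copies of u adjacent, so
  normalization shortens the string by a flip. Otherwise u occurs only once: flipping the whole
  string moves u to the end, where no flip of the remaining prefix ever disturbs it, so one flip
  reduces the problem to a string with one symbol and one position fewer. In both cases the
  length decreases at least as fast as the number of flips spent.\<close>

lemma normalized_iff_distinct_adj: "normalized s \<longleftrightarrow> distinct_adj s"
  by (simp add: normalized_def distinct_adj_conv_nth)

lemma set_flip [simp]: "set (flip i s) = set s"
  unfolding flip_def normalize_def by simp (metis set_append append_take_drop_id)

lemma distinct_adj_flip: "distinct_adj (flip i s)"
  by (simp add: flip_def normalize_def)

lemma flip_append_fresh:
  assumes "i \<le> length xs" and "u \<notin> set xs"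
  shows "flip i (xs @ [u]) = flip i xs @ [u]"
proof -
  define ys where "ys = rev (take i xs) @ drop i xs"
  have "set ys = set xs"
    unfolding ys_def by (metis set_append set_rev append_take_drop_id Un_commute)
  with assms(2) have "ys = [] \<or> last ys \<noteq> u"
    using last_in_set by metis
  then have "remdups_adj (ys @ [u]) = remdups_adj ys @ [u]"
    using remdups_adj_append'[of ys "[u]"] by auto
  then show ?thesis
    using assms(1) by (simp add: flip_def normalize_def ys_def)
qed

lemma relpowp_flip_step_append_fresh:
  "(flip_step ^^ m) xs ys \<Longrightarrow> u \<notin> set xs \<Longrightarrow> (flip_step ^^ m) (xs @ [u]) (ys @ [u])"
proof (induction m arbitrary: xs)
  case 0
  then show ?case by simp
next
  case (Suc m)
  then obtain xs' where step: "flip_step xs xs'" and rest: "(flip_step ^^ m) xs' ys"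
    using relpowp_Suc_D2 by metis
  then obtain i where i: "1 \<le> i" "i \<le> length xs" and xs': "xs' = flip i xs"
    unfolding flip_step_def by blast
  have "flip_step (xs @ [u]) (xs' @ [u])"
    unfolding flip_step_def xs' using i flip_append_fresh[OF i(2) Suc.prems(2)] by auto
  moreover have "(flip_step ^^ m) (xs' @ [u]) (ys @ [u])"
    using Suc.IH[OF rest] Suc.prems(2) xs' by simp
  ultimately show ?case
    by (rule relpowp_Suc_I2)
qed

lemma flip_step_shortens_if_hd_recurs:
  assumes "u \<in> set w"
  obtains t where "flip_step (u # w) t" and "length t < length (u # w)"
    and "set t = set (u # w)" and "distinct_adj t"
proof -
  obtain j where j: "j < length w" "w ! j = u"
    using assms by (auto simp: in_set_conv_nth)
  let ?ys = "rev (take (Suc j) (u # w)) @ drop (Suc j) (u # w)"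
  have "?ys = rev (take j w) @ [u, u] @ drop (Suc j) w"
    using j by (simp add: Cons_nth_drop_Suc[symmetric])
  then have "\<not> distinct_adj ?ys"
    by (simp add: distinct_adj_append_iff)
  then have "length (remdups_adj ?ys) < length ?ys"
    by (metis order_le_neq_trans remdups_adj_length distinct_adj_conv_length_remdups_adj)
  then have "length (flip (Suc j) (u # w)) < length (u # w)"
    using j by (simp add: flip_def normalize_def)
  moreover have "flip_step (u # w) (flip (Suc j) (u # w))"
    unfolding flip_step_def using j by (intro exI[of _ "Suc j"]) auto
  ultimately show thesis
    using that distinct_adj_flip set_flip by blast
qed

lemma flip_step_moves_hd_last:
  assumes "distinct_adj (u # w)"
  shows "flip_step (u # w) (rev w @ [u])"
proof -
  have "remdups_adj (rev (u # w)) = rev (u # w)"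
    using assms by (simp only: remdups_adj_rev distinct_adj_altdef)
  then have "flip (length (u # w)) (u # w) = rev w @ [u]"
    by (simp add: flip_def normalize_def)
  then show ?thesis
    unfolding flip_step_def by (metis le_refl length_Cons le_add1 Suc_eq_plus1_left)
qed

lemma flips_to_distinct:
  assumes "distinct_adj s"
  shows "\<exists>m t. m \<le> length s - 2 \<and> (flip_step ^^ m) s t \<and> length t = card (set s)"
  using assms
proof (induction "length s" arbitrary: s rule: less_induct)
  case less
  show ?case
  proof (cases "length s = card (set s)")
    case True
    then show ?thesis by auto
  next
    case False
    then have repeats: "card (set s) < length s"
      using card_length[of s] by linarith
    then obtain u w where s: "s = u # w"
      by (cases s) auto
    show ?thesis
    proof (cases "u \<in> set w")
      case True
      then obtain t where step: "flip_step s t" and shorter: "length t < length s"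
        and set_t: "set t = set s" and "distinct_adj t"
        using flip_step_shortens_if_hd_recurs s by metis
      then obtain m r where m: "m \<le> length t - 2" "(flip_step ^^ m) t r"
        and r: "length r = card (set t)"
        using less.hyps by blast
      have "hd w \<noteq> u" "w \<noteq> []"
        using less.prems True s by (cases w; auto)+
      then have "card {u, hd w} \<le> card (set s)"
        using s by (intro card_mono) auto
      then have "Suc m \<le> length s - 2"
        using m(1) shorter repeats \<open>hd w \<noteq> u\<close> by simp
      moreover have "(flip_step ^^ Suc m) s r"
        using step m(2) by (rule relpowp_Suc_I2)
      ultimately show ?thesis
        using r set_t by metis
    next
      case False
      have "distinct_adj (rev w)"
        using less.prems s by (simp add: distinct_adj_ConsD)
      then obtain m r where m: "m \<le> length w - 2" "(flip_step ^^ m) (rev w) r"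
        and r: "length r = card (set w)"
        using less.hyps[of "rev w"] s by auto
      have "(flip_step ^^ m) (rev w @ [u]) (r @ [u])"
        using relpowp_flip_step_append_fresh[OF m(2)] False by simp
      then have "(flip_step ^^ Suc m) s (r @ [u])"
        using flip_step_moves_hd_last less.prems s by (metis relpowp_Suc_I2)
      moreover have "2 \<le> length w"
        using repeats s False by (cases w rule: remdups_adj.cases) auto
      ultimately show ?thesis
        using m(1) r s False by (intro exI[of _ "Suc m"] exI[of _ "r @ [u]"]) auto
    qed
  qed
qed

theorem lemma3p2:
  fixes k :: nat and s :: "nat list"
  assumes "k \<ge> 2" and "normalized s" and "fully_kary k s"
  shows "grouping_distance k s \<le> length s - 2"
proof -
  obtain m t where m: "m \<le> length s - 2" and "(flip_step ^^ m) s t"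
    and "length t = card (set s)"
    using flips_to_distinct assms(2) normalized_iff_distinct_adj by blast
  moreover have "card (set s) = k"
    using assms(3) by (simp add: fully_kary_def)
  ultimately have "grouping_distance k s \<le> m"
    unfolding grouping_distance_def by (intro Least_le) auto
  with m show ?thesis
    by linarith
qed

end
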